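(* Let $\Omega:=\{(z,\zeta,\eta)\in\mathbb{R}^{1+n}\times\mathbb{R}^{1+n}\times\mathbb{R}^p:(z,0)\neq(\zeta,\eta)\}$ and let $g\in C^\infty(\Omega)$ be homogeneous of degree $\alpha<-q^*$ with respect to the dilations $E_\lambda((t,x),(s,y),\eta)=(\lambda^2t,\delta_\lambda(x),\lambda^2s,\delta_\lambda(y),\delta^*_\lambda(\eta))$. Let $Z$ be a smooth vector field in the $(z,\zeta)$-variables, homogeneous of positive degree with respect to $((t,x),(s,y))\mapsto(\lambda^2t,\delta_\lambda(x),\lambda^2s,\delta_\lambda(y))$. Then: (1) for every $(z,\zeta)$ with $z\neq\zeta$, the map $\eta\mapsto g(z,\zeta,\eta)$ belongs to $L^1(\mathbb{R}^p)$; (2) for every $z,\zeta\in\mathbb{R}^{1+n}$ with $z\neq\zeta$, $$Z\Big\{(z,\zeta)\mapsto\int_{\mathbb{R}^p}g(z,\zeta,\eta)\,d\eta\Big\}=\int_{\mathbb{R}^p}Z\{(z,\zeta)\mapsto g(z,\zeta,\eta)\}\,d\eta.$$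
   Context: Here $\delta_\lambda(x)=(\lambda^{\sigma_1}x_1,\dots,\lambda^{\sigma_n}x_n)$ on $\mathbb{R}^n$ with $1=\sigma_1\le\dots\le\sigma_n$, and $\delta^*_\lambda(\eta)=(\lambda^{\sigma^*_1}\eta_1,\dots,\lambda^{\sigma^*_p}\eta_p)$ on $\mathbb{R}^p$ with positive exponents $\sigma^*_k$ (the dilations of a homogeneous Carnot group on $\mathbb{R}^n\times\mathbb{R}^p$ with dilations $(\delta_\lambda,\delta^*_\lambda)$), and $q^*=\sum_{k=1}^p\sigma^*_k$. A function $g$ is homogeneous of degree $\alpha$ w.r.t. $E_\lambda$ if $g\circ E_\lambda=\lambda^\alpha g$ for all $\lambda>0$; a vector field $Z$ is homogeneous of degree $m$ if $Z(f\circ E_\lambda)=\lambda^m(Zf)\circ E_\lambda$. *)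

theory Defs
  imports "HOL-Analysis.Analysis"
begin

text \<open>C-infinity on a set S (meant for open S): f is (Frechet) differentiable on S
  and every directional derivative x \<mapsto> f'(x) v is again C-infinity on S.
  Coinductive, i.e. derivatives of all orders exist.\<close>
coinductive smooth_on :: "'a::euclidean_space set \<Rightarrow> ('a \<Rightarrow> real) \<Rightarrow> bool" where
  "f differentiable_on S \<Longrightarrow> (\<And>v. smooth_on S (\<lambda>x. frechet_derivative f (at x) v))
     \<Longrightarrow> smooth_on S f"

definition dil :: "('n::finite \<Rightarrow> real) \<Rightarrow> real \<Rightarrow> real^'n \<Rightarrow> real^'n" where
  "dil \<sigma> r x = (\<chi> i. (r powr \<sigma> i) * x $ i)"

definition dilP :: "('n::finite \<Rightarrow> real) \<Rightarrow> real \<Rightarrow> real \<times> (real^'n) \<Rightarrow> real \<times> (real^'n)" where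
  "dilP \<sigma> r z = (r\<^sup>2 * fst z, dil \<sigma> r (snd z))"

definition dilW :: "('n::finite \<Rightarrow> real) \<Rightarrow> real
     \<Rightarrow> (real \<times> (real^'n)) \<times> (real \<times> (real^'n)) \<Rightarrow> (real \<times> (real^'n)) \<times> (real \<times> (real^'n))" where
  "dilW \<sigma> r w = (dilP \<sigma> r (fst w), dilP \<sigma> r (snd w))"

definition dilE :: "('n::finite \<Rightarrow> real) \<Rightarrow> ('p::finite \<Rightarrow> real) \<Rightarrow> real
     \<Rightarrow> (real \<times> (real^'n)) \<times> (real \<times> (real^'n)) \<times> (real^'p)
     \<Rightarrow> (real \<times> (real^'n)) \<times> (real \<times> (real^'n)) \<times> (real^'p)" where
  "dilE \<sigma> \<sigma>s r u = (dilP \<sigma> r (fst u), dilP \<sigma> r (fst (snd u)), dil \<sigma>s r (snd (snd u)))"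

definition Omega :: "((real \<times> (real^'n::finite)) \<times> (real \<times> (real^'n)) \<times> (real^'p::finite)) set" where
  "Omega = {(z, \<zeta>, \<eta>). (z, 0) \<noteq> (\<zeta>, \<eta>)}"

definition homogeneous_on :: "'a set \<Rightarrow> (real \<Rightarrow> 'a \<Rightarrow> 'a) \<Rightarrow> real \<Rightarrow> ('a \<Rightarrow> real) \<Rightarrow> bool" where
  "homogeneous_on S E \<alpha> g \<longleftrightarrow> (\<forall>r>0. \<forall>u\<in>S. g (E r u) = r powr \<alpha> * g u)"

definition vf_apply :: "('a::euclidean_space \<Rightarrow> 'a) \<Rightarrow> ('a \<Rightarrow> real) \<Rightarrow> 'a \<Rightarrow> real" where
  "vf_apply a f w = frechet_derivative f (at w) (a w)"

definition smooth_vf :: "('a::euclidean_space \<Rightarrow> 'a) \<Rightarrow> bool" where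
  "smooth_vf a \<longleftrightarrow> (\<forall>b\<in>Basis. smooth_on UNIV (\<lambda>w. a w \<bullet> b))"

definition homogeneous_vf :: "(real \<Rightarrow> 'a \<Rightarrow> 'a) \<Rightarrow> real \<Rightarrow> ('a::euclidean_space \<Rightarrow> 'a) \<Rightarrow> bool" where
  "homogeneous_vf E m a \<longleftrightarrow> (\<forall>f. smooth_on UNIV f \<longrightarrow> (\<forall>r>0. \<forall>w.
      vf_apply a (\<lambda>v. f (E r v)) w = r powr m * vf_apply a f (E r w)))"

end

theory Submission
  imports Defs
begin

text \<open>Fix z \<noteq> \<zeta> and let N(\<eta>) = (\<Sum>k. |\<eta>_k| powr (1/\<sigma>*_k)), which is homogeneous of degree 1
  for \<delta>*. With r = max 1 N(\<eta>), every point (w, \<eta>) with w near (z, \<zeta>) is the dilate E_r u of a point u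
  of a fixed compact subset of \<Omega>: if N(\<eta>) \<le> 1 it lies in such a set already, otherwise E_(1/r) moves
  it onto the sphere N = 1 without leaving a bounded set, since \<sigma> \<ge> 0. Homogeneity therefore bounds
  g and its derivative at (w, \<eta>) by a constant times r powr \<alpha> = r powr (\<gamma> q*) with \<gamma> = \<alpha>/q* < -1,
  and this is at most the integrable product over k of 2 powr (-\<gamma>) (1 + |\<eta>_k|) powr \<gamma>. Differentiating
  under the integral sign with this majorant yields all claims.\<close>

section \<open>Differentiation under the integral sign\<close>

lemma integral_dominated_convergence_at:
  fixes s :: "'a::first_countable_topology \<Rightarrow> 'b \<Rightarrow> 'c::{banach, second_countable_topology}"
  assumes "f \<in> borel_measurable M" and "integrable M w"
    and "\<forall>\<^sub>F t in at x. s t \<in> borel_measurable M \<and> (AE y in M. norm (s t y) \<le> w y)"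
    and "AE y in M. ((\<lambda>t. s t y) \<longlongrightarrow> f y) (at x)"
  shows "((\<lambda>t. integral\<^sup>L M (s t)) \<longlongrightarrow> integral\<^sup>L M f) (at x)"
proof (subst tendsto_at_iff_sequentially, intro allI impI)
  fix X assume "\<forall>i. X i \<in> UNIV - {x}" and "X \<longlonglongrightarrow> x"
  then have X: "filterlim X (at x) sequentially"
    by (simp add: filterlim_at)
  from filterlim_iff[THEN iffD1, OF X, rule_format, OF assms(3)]
  obtain N where N: "\<And>n. n \<ge> N \<Longrightarrow> s (X n) \<in> borel_measurable M \<and> (AE y in M. norm (s (X n) y) \<le> w y)"
    by (auto simp: eventually_sequentially)
  have "(\<lambda>n. integral\<^sup>L M (s (X (n + N)))) \<longlonglongrightarrow> integral\<^sup>L M f"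
  proof (rule integral_dominated_convergence)
    show "AE y in M. (\<lambda>n. s (X (n + N)) y) \<longlonglongrightarrow> f y"
      using assms(4) by eventually_elim (intro LIMSEQ_ignore_initial_segment filterlim_compose[OF _ X])
  qed (use assms(1,2) N in auto)
  then show "((\<lambda>t. integral\<^sup>L M (s t)) \<circ> X) \<longlonglongrightarrow> integral\<^sup>L M f"
    unfolding comp_def by (rule LIMSEQ_offset)
qed

lemma linearization_error_le:
  fixes f :: "'a::{real_normed_vector, perfect_space} \<Rightarrow> 'b::real_normed_vector"
  assumes der: "\<And>x. x \<in> ball a \<delta> \<Longrightarrow> (f has_derivative f' x) (at x)"
    and bound: "\<And>x v. x \<in> ball a \<delta> \<Longrightarrow> norm (f' x v) \<le> B * norm v"
    and h: "a + h \<in> ball a \<delta>"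
  shows "norm (f (a + h) - f a - f' a h) \<le> 2 * B * norm h"
proof -
  have a: "a \<in> ball a \<delta>" using h by (auto simp: dist_norm intro: le_less_trans[OF norm_ge_zero])
  have "norm (f (a + h) - f a - f' a (a + h - a)) \<le> norm (a + h - a) * (2 * B)"
  proof (rule differentiable_bound_linearization[where S="ball a \<delta>" and f'=f'])
    show "a + t *\<^sub>R (a + h - a) \<in> ball a \<delta>" if "t \<in> {0..1}" for t
    proof -
      have "norm (t *\<^sub>R h) \<le> norm h" using that by (auto intro: mult_left_le_one_le)
      then show ?thesis using h by (simp add: dist_norm)
    qed
    show "(f has_derivative f' x) (at x within ball a \<delta>)" if "x \<in> ball a \<delta>" for x
      using der[OF that] by (rule has_derivative_at_withinI)
    show "onorm (f' x - f' a) \<le> 2 * B" if "x \<in> ball a \<delta>" for x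
    proof (rule onorm_le)
      fix v
      have "norm (f' x v - f' a v) \<le> B * norm v + B * norm v"
        using bound[OF that] bound[OF a] by (intro norm_triangle_le_diff add_mono)
      then show "norm ((f' x - f' a) v) \<le> 2 * B * norm v" by simp
    qed
  qed (rule a)
  then show ?thesis by (simp add: mult.commute)
qed

context
  fixes G :: "'w::euclidean_space \<Rightarrow> 'b \<Rightarrow> real" and D :: "'w \<Rightarrow> 'b \<Rightarrow> 'w \<Rightarrow> real"
    and B :: "'b \<Rightarrow> real" and M :: "'b measure" and w0 :: 'w and \<delta> :: real
  assumes \<delta>_pos: "\<delta> > 0"
    and der: "\<And>w y. w \<in> ball w0 \<delta> \<Longrightarrow> ((\<lambda>w. G w y) has_derivative D w y) (at w)"
    and bound_G: "\<And>w y. w \<in> ball w0 \<delta> \<Longrightarrow> \<bar>G w y\<bar> \<le> B y"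
    and bound_D: "\<And>w y h. w \<in> ball w0 \<delta> \<Longrightarrow> \<bar>D w y h\<bar> \<le> B y * norm h"
    and B: "integrable M B"
    and meas_G: "\<And>w. w \<in> ball w0 \<delta> \<Longrightarrow> G w \<in> borel_measurable M"
    and meas_D: "\<And>h. (\<lambda>y. D w0 y h) \<in> borel_measurable M"
begin

lemma integrable_parametric:
  assumes "w \<in> ball w0 \<delta>" shows "integrable M (G w)"
  using B meas_G[OF assms] by (rule Bochner_Integration.integrable_bound)
    (use bound_G[OF assms] in \<open>auto intro!: AE_I2 order_trans[OF _ abs_ge_self]\<close>)

lemma integrable_parametric_derivative: "integrable M (\<lambda>y. D w0 y h)"
  using integrable_mult_left[OF B, of "norm h"] meas_D by (rule Bochner_Integration.integrable_bound)
    (use bound_D[of w0] \<delta>_pos in \<open>auto intro!: AE_I2 order_trans[OF _ abs_ge_self] simp: mult.commute\<close>)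

lemma tendsto_integral_remainder_quotient:
  "((\<lambda>h. \<integral>y. (G (w0 + h) y - G w0 y - D w0 y h) / norm h \<partial>M) \<longlongrightarrow> 0) (at 0)"
proof -
  define q where "q h y = (G (w0 + h) y - G w0 y - D w0 y h) / norm h" for h y
  have w0: "w0 \<in> ball w0 \<delta>" using \<delta>_pos by simp
  have "((\<lambda>h. \<integral>y. q h y \<partial>M) \<longlongrightarrow> (\<integral>y. 0 \<partial>M)) (at 0)"
  proof (rule integral_dominated_convergence_at[where w="\<lambda>y. 2 * B y"])
    show "\<forall>\<^sub>F h in at 0. q h \<in> borel_measurable M \<and> (AE y in M. norm (q h y) \<le> 2 * B y)"
      using eventually_at_ball[OF \<delta>_pos, of 0]
    proof eventually_elim
      case (elim h)
      then have "w0 + h \<in> ball w0 \<delta>" by (simp add: dist_norm)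
      moreover have "norm (D w y v) \<le> B y * norm v" if "w \<in> ball w0 \<delta>" for w y v
        using bound_D[OF that] by simp
      ultimately have "\<bar>G (w0 + h) y - G w0 y - D w0 y h\<bar> \<le> 2 * B y * norm h" for y
        using linearization_error_le[where f="\<lambda>w. G w y" and f'="\<lambda>w. D w y", OF der] by simp
      then have "norm (q h y) \<le> 2 * B y" for y
        using bound_G[OF w0, of y] by (cases "h = 0") (auto simp: q_def divide_le_eq)
      then show ?case
        unfolding q_def using meas_G[OF \<open>w0 + h \<in> ball w0 \<delta>\<close>] meas_G[OF w0] meas_D by auto
    qed
    show "AE y in M. ((\<lambda>h. q h y) \<longlongrightarrow> 0) (at 0)"
    proof (rule AE_I2)
      fix y
      have "((\<lambda>h. norm (G (w0 + h) y - G w0 y - D w0 y h) / norm h) \<longlongrightarrow> 0) (at 0)"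
        using der[OF w0, of y] unfolding has_derivative_at by simp
      then have "((\<lambda>h. norm (q h y)) \<longlongrightarrow> 0) (at 0)"
        unfolding q_def by simp
      then show "((\<lambda>h. q h y) \<longlongrightarrow> 0) (at 0)"
        by (rule tendsto_norm_zero_cancel)
    qed
  qed (use B in simp_all)
  then show ?thesis by (simp add: q_def)
qed

lemma has_derivative_integral:
  "((\<lambda>w. \<integral>y. G w y \<partial>M) has_derivative (\<lambda>h. \<integral>y. D w0 y h \<partial>M)) (at w0)"
proof -
  have w0: "w0 \<in> ball w0 \<delta>" using \<delta>_pos by simp
  define F where "F w = (\<integral>y. G w y \<partial>M)" for w
  define L where "L h = (\<integral>y. D w0 y h \<partial>M)" for h
  have "linear L"
    using integrable_parametric_derivative has_derivative_bounded_linear[OF der[OF w0]]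
    by (intro linearI) (simp_all add: L_def linear_simps bounded_linear.linear)
  then have "bounded_linear L" by (simp add: linear_conv_bounded_linear)
  have "((\<lambda>h. norm (\<integral>y. (G (w0 + h) y - G w0 y - D w0 y h) / norm h \<partial>M)) \<longlongrightarrow> 0) (at 0)"
    using tendsto_norm_zero[OF tendsto_integral_remainder_quotient] .
  moreover have "\<forall>\<^sub>F h in at 0. norm (\<integral>y. (G (w0 + h) y - G w0 y - D w0 y h) / norm h \<partial>M)
      = norm (F (w0 + h) - F w0 - L h) / norm h"
    using eventually_at_ball[OF \<delta>_pos, of 0]
  proof eventually_elim
    case (elim h)
    then have "w0 + h \<in> ball w0 \<delta>" by (simp add: dist_norm)
    then have "F (w0 + h) - F w0 - L h = (\<integral>y. G (w0 + h) y - G w0 y - D w0 y h \<partial>M)"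
      unfolding F_def L_def
      using integrable_parametric w0 integrable_parametric_derivative by simp
    then show ?case by simp
  qed
  ultimately have "((\<lambda>h. norm (F (w0 + h) - F w0 - L h) / norm h) \<longlongrightarrow> 0) (at 0)"
    by (rule Lim_transform_eventually)
  with \<open>bounded_linear L\<close> show ?thesis
    unfolding has_derivative_at F_def[symmetric] L_def[symmetric] by simp
qed

end

section \<open>An integrable product weight\<close>

lemma integrable_powr_from_1:
  fixes \<gamma> :: real assumes "\<gamma> < -1"
  shows "integrable lborel (\<lambda>t::real. indicator {1..} t * t powr \<gamma>)"
proof -
  have "(\<lambda>t. t powr \<gamma>) absolutely_integrable_on {1..}"
    using has_integral_powr_to_inf[OF assms, of 1]
    by (intro nonnegative_absolutely_integrable_1) (auto simp: integrable_on_def)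
  then show ?thesis
    by (subst (asm) set_integrable_def, subst (asm) integrable_completion) auto
qed

lemma integrable_one_plus_abs_powr:
  fixes \<gamma> :: real assumes "\<gamma> < -1"
  shows "integrable lborel (\<lambda>t::real. (1 + \<bar>t\<bar>) powr \<gamma>)"
proof -
  define f where "f = (\<lambda>t::real. indicator {1..} t * t powr \<gamma>)"
  have f: "integrable lborel f"
    unfolding f_def by (rule integrable_powr_from_1[OF assms])
  have "integrable lborel (\<lambda>t. f (1 + c * t))" if "c \<noteq> 0" for c
    by (rule lborel_integrable_real_affine_iff[OF that, of f 1, THEN iffD2, OF f])
  from this[of 1] this[of "-1"]
  have "integrable lborel (\<lambda>t. f (1 + t) + f (1 - t))" by simp
  then show ?thesis
  proof (rule Bochner_Integration.integrable_bound)
    show "(\<lambda>t::real. (1 + \<bar>t\<bar>) powr \<gamma>) \<in> borel_measurable lborel"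
      by (auto intro!: borel_measurable_continuous_onI continuous_intros)
    have "(1 + \<bar>t\<bar>) powr \<gamma> \<le> f (1 + t) + f (1 - t)" for t
      by (cases "t \<ge> 0") (simp_all add: f_def)
    then show "AE t in lborel. norm ((1 + \<bar>t\<bar>) powr \<gamma>) \<le> norm (f (1 + t) + f (1 - t))"
      by (intro AE_I2) (smt (verit) powr_ge_zero real_norm_def)
  qed
qed

lemma integrable_prod_one_plus_abs_powr:
  fixes \<gamma> :: real assumes "\<gamma> < -1"
  shows "integrable lborel (\<lambda>\<eta>::real^'p. \<Prod>k\<in>UNIV. (1 + \<bar>\<eta>$k\<bar>) powr \<gamma>)"
proof (rule integrableI_nonneg)
  show "(\<lambda>\<eta>::real^'p. \<Prod>k\<in>UNIV. (1 + \<bar>\<eta>$k\<bar>) powr \<gamma>) \<in> borel_measurable lborel"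
    by (auto intro!: borel_measurable_continuous_onI continuous_intros)
  show "AE \<eta> in lborel. 0 \<le> (\<Prod>k\<in>UNIV. (1 + \<bar>(\<eta>::real^'p)$k\<bar>) powr \<gamma>)"
    by (auto intro!: prod_nonneg)
  have fin: "(\<integral>\<^sup>+t. ennreal ((1 + \<bar>t\<bar>) powr \<gamma>) \<partial>(lborel::real measure)) < \<infinity>"
    using integrable_one_plus_abs_powr[OF assms] by (simp add: integrable_iff_bounded)
  have inj: "inj (\<lambda>k::'p. axis k (1::real))" by (auto simp: inj_on_def axis_eq_axis)
  have B: "(Basis :: (real^'p) set) = (\<lambda>k. axis k 1) ` UNIV" by (auto simp: Basis_vec_def)
  have "(\<Prod>b\<in>(Basis :: (real^'p) set). h b) = (\<Prod>k\<in>UNIV. h (axis k 1))" for h :: "real^'p \<Rightarrow> real"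
    unfolding B using inj by (simp add: prod.reindex)
  then have "(\<integral>\<^sup>+\<eta>. ennreal (\<Prod>k\<in>UNIV. (1 + \<bar>(\<eta>::real^'p)$k\<bar>) powr \<gamma>) \<partial>lborel)
      = (\<integral>\<^sup>+\<eta>. (\<Prod>b\<in>Basis. ennreal ((1 + \<bar>(\<eta>::real^'p) \<bullet> b\<bar>) powr \<gamma>)) \<partial>lborel)"
    by (intro nn_integral_cong) (simp add: prod_ennreal cart_eq_inner_axis)
  also have "\<dots> = (\<Prod>b\<in>(Basis::(real^'p) set). (\<integral>\<^sup>+t. ennreal ((1 + \<bar>t\<bar>) powr \<gamma>) \<partial>lborel))"
    by (rule nn_integral_lborel_prod) auto
  also have "\<dots> < \<infinity>" using fin by (simp add: power_less_top_ennreal)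
  finally show "(\<integral>\<^sup>+\<eta>. ennreal (\<Prod>k\<in>UNIV. (1 + \<bar>(\<eta>::real^'p)$k\<bar>) powr \<gamma>) \<partial>lborel) < \<infinity>" .
qed

definition decay_weight :: "real \<Rightarrow> real^'p::finite \<Rightarrow> real" where
  "decay_weight \<gamma> \<eta> = (\<Prod>k\<in>UNIV. 2 powr (-\<gamma>) * (1 + \<bar>\<eta>$k\<bar>) powr \<gamma>)"

lemma integrable_decay_weight:
  assumes "\<gamma> < -1" shows "integrable lborel (decay_weight \<gamma> :: real^'p::finite \<Rightarrow> real)"
proof -
  have "decay_weight \<gamma> = (\<lambda>\<eta>::real^'p. (2 powr (-\<gamma>)) ^ CARD('p) * (\<Prod>k\<in>UNIV. (1 + \<bar>\<eta>$k\<bar>) powr \<gamma>))"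
    by (auto simp: decay_weight_def prod.distrib)
  then show ?thesis using integrable_prod_one_plus_abs_powr[OF assms] by simp
qed

section \<open>Smooth homogeneous functions and dilations\<close>

lemma smooth_on_derivative: "smooth_on S f \<Longrightarrow> smooth_on S (\<lambda>x. frechet_derivative f (at x) v)"
  by (auto elim: smooth_on.cases)

lemma smooth_on_imp_continuous_on: "smooth_on S f \<Longrightarrow> continuous_on S f"
  by (auto elim: smooth_on.cases intro: differentiable_imp_continuous_on)

lemma smooth_on_has_derivative:
  assumes "smooth_on S f" "open S" "x \<in> S"
  shows "(f has_derivative frechet_derivative f (at x)) (at x)"
proof -
  have "f differentiable_on S" using assms(1) by (auto elim: smooth_on.cases)
  then show ?thesis
    using assms(2,3) differentiable_on_eq_differentiable_at frechet_derivative_works by blast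
qed

lemma has_derivative_homogeneous:
  fixes g :: "'a::real_normed_vector \<Rightarrow> real"
  assumes "open S" and E_S: "\<And>r u. r > 0 \<Longrightarrow> u \<in> S \<Longrightarrow> E r u \<in> S"
    and E_linear: "\<And>r. bounded_linear (E r)"
    and der: "\<And>u. u \<in> S \<Longrightarrow> (g has_derivative g' u) (at u)"
    and hom: "homogeneous_on S E \<alpha> g" and "r > 0" "u \<in> S"
  shows "g' (E r u) (E r v) = r powr \<alpha> * g' u v"
proof -
  have "((g \<circ> E r) has_derivative (g' (E r u) \<circ> E r)) (at u)"
    using bounded_linear_imp_has_derivative[OF E_linear] der[OF E_S[OF \<open>r > 0\<close> \<open>u \<in> S\<close>]]
    by (rule diff_chain_at)
  then have "((\<lambda>x. r powr \<alpha> * g x) has_derivative (g' (E r u) \<circ> E r)) (at u)"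
    by (rule has_derivative_transform_within_open[OF _ \<open>open S\<close> \<open>u \<in> S\<close>])
       (use hom \<open>r > 0\<close> in \<open>auto simp: homogeneous_on_def\<close>)
  moreover have "((\<lambda>x. r powr \<alpha> * g x) has_derivative (\<lambda>v. r powr \<alpha> * g' u v)) (at u)"
    using der[OF \<open>u \<in> S\<close>] by (auto intro!: derivative_eq_intros)
  ultimately have "g' (E r u) \<circ> E r = (\<lambda>v. r powr \<alpha> * g' u v)"
    by (rule has_derivative_unique)
  then show ?thesis by (metis comp_apply)
qed

lemma linear_dil: "linear (dil \<sigma> r)"
  by (rule linearI) (simp_all add: dil_def vec_eq_iff algebra_simps)

lemma bounded_linear_dilE: "bounded_linear (dilE \<sigma> \<sigma>s r)"
proof -
  have "linear (dilE \<sigma> \<sigma>s r)"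
    by (rule linearI) (simp_all add: dilE_def dilP_def linear_add[OF linear_dil]
        linear_scale[OF linear_dil] algebra_simps)
  then show ?thesis by (simp add: linear_conv_bounded_linear)
qed

lemma dil_1 [simp]: "dil \<sigma> 1 x = x"
  by (simp add: dil_def vec_eq_iff)

lemma dilE_1 [simp]: "dilE \<sigma> \<sigma>s 1 u = u"
  by (simp add: dilE_def dilP_def)

lemma dil_inverse: "r > 0 \<Longrightarrow> dil \<sigma> r (dil \<sigma> (1/r) x) = x"
  by (simp add: dil_def vec_eq_iff powr_divide)

lemma dilE_inverse: "r > 0 \<Longrightarrow> dilE \<sigma> \<sigma>s r (dilE \<sigma> \<sigma>s (1/r) u) = u"
  by (simp add: dilE_def dilP_def dil_inverse power_divide)

lemma dil_eq_0_iff: "r > 0 \<Longrightarrow> dil \<sigma> r x = 0 \<longleftrightarrow> x = 0"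
  by (auto simp: dil_def vec_eq_iff)

lemma dilP_inj: "r > 0 \<Longrightarrow> dilP \<sigma> r x = dilP \<sigma> r y \<longleftrightarrow> x = y"
  by (auto simp: dilP_def dil_def vec_eq_iff prod_eq_iff)

lemma dilE_pair: "dilE \<sigma> \<sigma>s r (fst w, snd w, \<eta>) = (fst (dilW \<sigma> r w), snd (dilW \<sigma> r w), dil \<sigma>s r \<eta>)"
  by (simp add: dilE_def dilW_def)

lemma open_Omega: "open (Omega :: ((real \<times> (real^'n::finite)) \<times> (real \<times> (real^'n)) \<times> (real^'p::finite)) set)"
proof -
  have "Omega = {u :: (real \<times> (real^'n)) \<times> (real \<times> (real^'n)) \<times> (real^'p). (fst u, 0) \<noteq> snd u}"
    by (auto simp: Omega_def)
  moreover have "open {u :: (real \<times> (real^'n)) \<times> (real \<times> (real^'n)) \<times> (real^'p). (fst u, 0) \<noteq> snd u}"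
    by (intro open_Collect_neq continuous_intros)
  ultimately show ?thesis by simp
qed

lemma dilE_Omega: "r > 0 \<Longrightarrow> u \<in> Omega \<Longrightarrow> dilE \<sigma> \<sigma>s r u \<in> Omega"
  by (cases u) (auto simp: Omega_def dilE_def dilP_inj dil_eq_0_iff)

lemma norm_Pair_mono: "norm a' \<le> norm a \<Longrightarrow> norm b' \<le> norm b \<Longrightarrow> norm (a', b') \<le> norm (a, b)"
  unfolding norm_Pair by (intro real_sqrt_le_mono add_mono power_mono) auto

context
  fixes r :: real assumes r: "0 < r" "r \<le> 1"
begin

lemma norm_dil_le:
  assumes "\<forall>i. \<sigma> i \<ge> 0" shows "norm (dil \<sigma> r x) \<le> norm x"
  unfolding norm_vec_def
proof (rule L2_set_mono)
  fix i
  have "r powr \<sigma> i \<le> 1" using r assms by (intro powr_le1) auto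
  then show "norm (dil \<sigma> r x $ i) \<le> norm (x $ i)"
    using r by (simp add: dil_def abs_mult mult_left_le_one_le)
qed simp

lemma norm_dilP_le:
  assumes "\<forall>i. \<sigma> i \<ge> 0" shows "norm (dilP \<sigma> r z) \<le> norm z"
proof -
  have "\<bar>r\<^sup>2 * fst z\<bar> \<le> \<bar>fst z\<bar>"
    using r by (simp add: abs_mult mult_left_le_one_le power_le_one)
  then have "norm (dilP \<sigma> r z) \<le> norm (fst z, snd z)"
    unfolding dilP_def by (intro norm_Pair_mono norm_dil_le assms) auto
  then show ?thesis by simp
qed

lemma norm_dilW_le:
  assumes "\<forall>i. \<sigma> i \<ge> 0" shows "norm (dilW \<sigma> r w) \<le> norm w"
proof -
  have "norm (dilW \<sigma> r w) \<le> norm (fst w, snd w)"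
    unfolding dilW_def by (intro norm_Pair_mono norm_dilP_le assms)
  then show ?thesis by simp
qed

lemma norm_dilE_le:
  assumes "\<forall>i. \<sigma> i \<ge> 0" "\<forall>k. \<sigma>s k \<ge> 0" shows "norm (dilE \<sigma> \<sigma>s r u) \<le> norm u"
proof -
  have "norm (dilE \<sigma> \<sigma>s r u) \<le> norm (fst u, fst (snd u), snd (snd u))"
    unfolding dilE_def by (intro norm_Pair_mono norm_dilP_le norm_dil_le assms)
  then show ?thesis by simp
qed

end

section \<open>The homogeneous norm on the fibre\<close>

definition hom_norm :: "('p::finite \<Rightarrow> real) \<Rightarrow> real^'p \<Rightarrow> real" where
  "hom_norm \<sigma>s \<eta> = (\<Sum>k\<in>UNIV. \<bar>\<eta>$k\<bar> powr (1 / \<sigma>s k))"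

context
  fixes \<sigma>s :: "'p::finite \<Rightarrow> real" assumes \<sigma>s_pos: "\<forall>k. \<sigma>s k > 0"
begin

lemma continuous_on_hom_norm: "continuous_on UNIV (hom_norm \<sigma>s)"
  unfolding hom_norm_def using \<sigma>s_pos by (intro continuous_intros continuous_on_powr') auto

lemma hom_norm_nonneg: "hom_norm \<sigma>s \<eta> \<ge> 0"
  by (simp add: hom_norm_def sum_nonneg)

lemma hom_norm_0 [simp]: "hom_norm \<sigma>s 0 = 0"
  using \<sigma>s_pos by (simp add: hom_norm_def)

lemma hom_norm_dil: "r > 0 \<Longrightarrow> hom_norm \<sigma>s (dil \<sigma>s r \<eta>) = r * hom_norm \<sigma>s \<eta>"
proof -
  assume "r > 0"
  then have "(r powr \<sigma>s k) powr (1 / \<sigma>s k) = r" for k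
    using \<sigma>s_pos[rule_format, of k] by (simp add: powr_powr)
  then show ?thesis
    using \<open>r > 0\<close> by (simp add: hom_norm_def dil_def abs_mult powr_mult sum_distrib_left)
qed

lemma abs_le_hom_norm_powr: "\<bar>\<eta>$k\<bar> \<le> hom_norm \<sigma>s \<eta> powr \<sigma>s k"
proof -
  have "\<bar>\<eta>$k\<bar> powr (1 / \<sigma>s k) \<le> hom_norm \<sigma>s \<eta>"
    unfolding hom_norm_def by (rule member_le_sum) auto
  then have "(\<bar>\<eta>$k\<bar> powr (1 / \<sigma>s k)) powr \<sigma>s k \<le> hom_norm \<sigma>s \<eta> powr \<sigma>s k"
    using \<sigma>s_pos by (intro powr_mono2) (auto simp: less_imp_le)
  then show ?thesis using \<sigma>s_pos[rule_format, of k] by (simp add: powr_powr)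
qed

lemma bounded_hom_norm_le_1: "bounded {\<eta>. hom_norm \<sigma>s \<eta> \<le> 1}"
proof -
  have "norm \<eta> \<le> real CARD('p)" if "hom_norm \<sigma>s \<eta> \<le> 1" for \<eta>
  proof -
    have "hom_norm \<sigma>s \<eta> powr \<sigma>s k \<le> 1" for k
      using that \<sigma>s_pos hom_norm_nonneg[of \<eta>] by (intro powr_le1) (auto simp: less_imp_le)
    then have "\<bar>\<eta>$k\<bar> \<le> 1" for k
      using abs_le_hom_norm_powr[of \<eta> k] by (rule order_trans[rotated])
    then have "(\<Sum>k\<in>UNIV. \<bar>\<eta>$k\<bar>) \<le> (\<Sum>k\<in>(UNIV::'p set). 1)" by (intro sum_mono)
    then show ?thesis using norm_le_l1_cart[of \<eta>] by simp
  qed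
  then show ?thesis unfolding bounded_iff by blast
qed

lemma compact_hom_norm_le_1: "compact {\<eta>. hom_norm \<sigma>s \<eta> \<le> 1}"
  using bounded_hom_norm_le_1 continuous_on_hom_norm
  by (auto simp: compact_eq_bounded_closed intro!: closed_Collect_le continuous_intros)

lemma compact_hom_norm_eq_1: "compact {\<eta>. hom_norm \<sigma>s \<eta> = 1}"
proof -
  have "bounded {\<eta>. hom_norm \<sigma>s \<eta> = 1}"
    by (rule bounded_subset[OF bounded_hom_norm_le_1]) auto
  then show ?thesis using continuous_on_hom_norm
    by (auto simp: compact_eq_bounded_closed intro!: closed_Collect_eq continuous_intros)
qed

lemma max_1_hom_norm_powr_le_decay_weight:
  assumes "\<gamma> \<le> 0"
  shows "max 1 (hom_norm \<sigma>s \<eta>) powr (\<gamma> * (\<Sum>k\<in>UNIV. \<sigma>s k)) \<le> decay_weight \<gamma> \<eta>"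
proof -
  define R where "R = max 1 (hom_norm \<sigma>s \<eta>)"
  have "R powr (\<gamma> * (\<Sum>k\<in>UNIV. \<sigma>s k)) = (\<Prod>k\<in>UNIV. (R powr \<sigma>s k) powr \<gamma>)"
    by (simp add: R_def sum_distrib_left powr_sum powr_powr mult.commute)
  also have "\<dots> \<le> decay_weight \<gamma> \<eta>"
    unfolding decay_weight_def
  proof (intro prod_mono conjI)
    fix k
    have "1 \<le> R powr \<sigma>s k" using \<sigma>s_pos by (simp add: R_def ge_one_powr_ge_zero less_imp_le)
    moreover have "hom_norm \<sigma>s \<eta> powr \<sigma>s k \<le> R powr \<sigma>s k"
      using \<sigma>s_pos[rule_format, of k] by (intro powr_mono2) (auto simp: R_def hom_norm_nonneg)
    then have "\<bar>\<eta>$k\<bar> \<le> R powr \<sigma>s k"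
      using abs_le_hom_norm_powr[of \<eta> k] by linarith
    ultimately have "(R powr \<sigma>s k) powr \<gamma> \<le> ((1 + \<bar>\<eta>$k\<bar>) / 2) powr \<gamma>"
      using assms by (intro powr_mono2') auto
    then show "(R powr \<sigma>s k) powr \<gamma> \<le> 2 powr (-\<gamma>) * (1 + \<bar>\<eta>$k\<bar>) powr \<gamma>"
      by (simp add: powr_divide powr_minus field_simps)
  qed simp
  finally show ?thesis unfolding R_def .
qed

end

section \<open>Domination off the diagonal\<close>

lemma fst_neq_snd_near:
  fixes w :: "'a::metric_space \<times> 'a"
  assumes "z \<noteq> \<zeta>" and "dist w (z, \<zeta>) \<le> dist z \<zeta> / 3"
  shows "fst w \<noteq> snd w"
proof
  assume "fst w = snd w"
  then have "dist z \<zeta> \<le> dist (fst w) z + dist (snd w) \<zeta>"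
    by (metis dist_commute dist_triangle)
  also have "\<dots> \<le> 2 * dist w (z, \<zeta>)"
    using dist_fst_le[of w "(z, \<zeta>)"] dist_snd_le[of w "(z, \<zeta>)"] by simp
  finally have "dist z \<zeta> \<le> 2 * dist w (z, \<zeta>)" .
  moreover have "0 < dist z \<zeta>" using assms(1) by simp
  ultimately show False using assms(2) by linarith
qed

lemma rescaled_off_diagonal_in_compact:
  fixes z \<zeta> :: "real \<times> (real^'n::finite)" and \<sigma> :: "'n \<Rightarrow> real" and \<sigma>s :: "'p::finite \<Rightarrow> real"
  assumes "z \<noteq> \<zeta>" and \<sigma>_nonneg: "\<forall>i. \<sigma> i \<ge> 0" and \<sigma>s_pos: "\<forall>k. \<sigma>s k > 0"
  obtains \<delta> K where "\<delta> > 0" "compact K" "K \<subseteq> Omega"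
    "\<And>w (\<eta> :: real^'p). w \<in> ball (z, \<zeta>) \<delta> \<Longrightarrow> (fst w, snd w, \<eta>) \<in> Omega"
    "\<And>w \<eta>. w \<in> ball (z, \<zeta>) \<delta> \<Longrightarrow> dilE \<sigma> \<sigma>s (1 / max 1 (hom_norm \<sigma>s \<eta>)) (fst w, snd w, \<eta>) \<in> K"
proof
  define \<delta> where "\<delta> = dist z \<zeta> / 3"
  show "\<delta> > 0" using \<open>z \<noteq> \<zeta>\<close> by (simp add: \<delta>_def)
  have off_diagonal: "fst w \<noteq> snd w" if "w \<in> cball (z, \<zeta>) \<delta>" for w
    using that by (intro fst_neq_snd_near[OF \<open>z \<noteq> \<zeta>\<close>]) (simp add: \<delta>_def dist_commute)
  define emb :: "_ \<Rightarrow> (real \<times> (real^'n)) \<times> (real \<times> (real^'n)) \<times> (real^'p)"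
    where "emb p = (fst (fst p), snd (fst p), snd p)" for p
  define R where "R = norm (z, \<zeta>) + \<delta>"
  define K1 where "K1 = emb ` (cball (z, \<zeta>) \<delta> \<times> {\<eta>. hom_norm \<sigma>s \<eta> \<le> 1})"
  define K2 where "K2 = emb ` (cball 0 R \<times> {\<eta>. hom_norm \<sigma>s \<eta> = 1})"
  have "continuous_on UNIV emb" unfolding emb_def by (intro continuous_intros)
  then show "compact (K1 \<union> K2)" unfolding K1_def K2_def using \<sigma>s_pos
    by (intro compact_Un compact_continuous_image compact_Times compact_cball
        compact_hom_norm_le_1 compact_hom_norm_eq_1) (auto intro: continuous_on_subset)
  have "K1 \<subseteq> Omega"
  proof
    fix u assume "u \<in> K1"
    then obtain w \<eta> where "w \<in> cball (z, \<zeta>) \<delta>" "u = (fst w, snd w, \<eta>)"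
      by (auto simp: K1_def emb_def)
    with off_diagonal show "u \<in> Omega" by (simp add: Omega_def)
  qed
  moreover have "K2 \<subseteq> Omega"
    using hom_norm_0[OF \<sigma>s_pos] by (auto simp: K2_def emb_def Omega_def)
  ultimately show "K1 \<union> K2 \<subseteq> Omega" by simp
  show "(fst w, snd w, \<eta>) \<in> Omega" if "w \<in> ball (z, \<zeta>) \<delta>" for w \<eta>
    using off_diagonal[of w] that by (simp add: Omega_def)
  fix w \<eta> assume w: "w \<in> ball (z, \<zeta>) \<delta>"
  define r where "r = max 1 (hom_norm \<sigma>s \<eta>)"
  show "dilE \<sigma> \<sigma>s (1 / r) (fst w, snd w, \<eta>) \<in> K1 \<union> K2"
  proof (cases "hom_norm \<sigma>s \<eta> \<le> 1")
    case True
    then show ?thesis using w by (auto simp: r_def K1_def emb_def image_iff)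
  next
    case False
    then have "r > 1" by (simp add: r_def)
    have "norm (dilW \<sigma> (1/r) w) \<le> norm w"
      using \<open>r > 1\<close> \<sigma>_nonneg by (intro norm_dilW_le) auto
    also have "\<dots> \<le> R"
      using w norm_triangle_ineq2[of w "(z, \<zeta>)"] by (simp add: R_def dist_norm norm_minus_commute)
    finally have "dilW \<sigma> (1/r) w \<in> cball 0 R" by simp
    moreover have "hom_norm \<sigma>s (dil \<sigma>s (1/r) \<eta>) = 1"
      using False \<open>r > 1\<close> by (simp add: hom_norm_dil[OF \<sigma>s_pos] r_def)
    ultimately show ?thesis
      unfolding dilE_pair K2_def emb_def by (auto simp: image_iff)
  qed
qed

lemma C1_bounded_on_compact:
  fixes g :: "'a::euclidean_space \<Rightarrow> real"
  assumes der: "\<And>u. u \<in> S \<Longrightarrow> (g has_derivative g' u) (at u)"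
    and cont: "\<And>v. continuous_on S (\<lambda>u. g' u v)"
    and "compact K" "K \<subseteq> S"
  obtains M where "0 \<le> M" "\<And>u. u \<in> K \<Longrightarrow> \<bar>g u\<bar> \<le> M" "\<And>u v. u \<in> K \<Longrightarrow> \<bar>g' u v\<bar> \<le> M * norm v"
proof -
  define \<Phi> where "\<Phi> u = \<bar>g u\<bar> + (\<Sum>b\<in>Basis. \<bar>g' u b\<bar>)" for u
  have "continuous_on S g"
    by (rule has_derivative_continuous_on[OF has_derivative_at_withinI[OF der]])
  then have "continuous_on S \<Phi>"
    unfolding \<Phi>_def by (intro continuous_intros cont)
  then have "continuous_on K \<Phi>"
    using \<open>K \<subseteq> S\<close> by (rule continuous_on_subset)
  then have "bounded (\<Phi> ` K)"
    by (intro compact_imp_bounded compact_continuous_image \<open>compact K\<close>)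
  then obtain M where "M > 0" and M: "\<And>u. u \<in> K \<Longrightarrow> \<bar>\<Phi> u\<bar> \<le> M"
    unfolding bounded_pos by auto
  have g_le: "\<bar>g u\<bar> \<le> M" and sum_le: "(\<Sum>b\<in>Basis. \<bar>g' u b\<bar>) \<le> M" if "u \<in> K" for u
  proof -
    have "0 \<le> (\<Sum>b\<in>Basis. \<bar>g' u b\<bar>)" by (simp add: sum_nonneg)
    then show "\<bar>g u\<bar> \<le> M" "(\<Sum>b\<in>Basis. \<bar>g' u b\<bar>) \<le> M"
      using abs_le_D1[OF M[OF that]] unfolding \<Phi>_def by linarith+
  qed
  have g'_le: "\<bar>g' u v\<bar> \<le> M * norm v" if "u \<in> K" for u v
  proof -
    have lin: "bounded_linear (g' u)"
      using der \<open>K \<subseteq> S\<close> that by (blast intro: has_derivative_bounded_linear)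
    have "\<bar>g' u v\<bar> \<le> onorm (g' u) * norm v" using onorm[OF lin] by simp
    also have "\<dots> \<le> (\<Sum>b\<in>Basis. \<bar>g' u b\<bar>) * norm v"
      using onorm_componentwise[OF lin] by (intro mult_right_mono) (auto simp: real_norm_def)
    also have "\<dots> \<le> M * norm v"
      using sum_le[OF that] by (intro mult_right_mono) auto
    finally show ?thesis .
  qed
  show ?thesis using \<open>M > 0\<close> g_le g'_le by (intro that[of M]) auto
qed

lemma homogeneous_bounds_dilE:
  fixes g :: "(real \<times> (real^'n::finite)) \<times> (real \<times> (real^'n)) \<times> (real^'p::finite) \<Rightarrow> real"
  assumes \<sigma>_nonneg: "\<forall>i. \<sigma> i \<ge> 0" and \<sigma>s_nonneg: "\<forall>k. \<sigma>s k \<ge> 0"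
    and der: "\<And>u. u \<in> Omega \<Longrightarrow> (g has_derivative g' u) (at u)"
    and hom: "homogeneous_on Omega (dilE \<sigma> \<sigma>s) \<alpha> g"
    and "r \<ge> 1" "u \<in> Omega" and g_le: "\<bar>g u\<bar> \<le> M" and g'_le: "\<And>v. \<bar>g' u v\<bar> \<le> M * norm v"
  shows "\<bar>g (dilE \<sigma> \<sigma>s r u)\<bar> \<le> r powr \<alpha> * M"
    and "\<bar>g' (dilE \<sigma> \<sigma>s r u) v\<bar> \<le> r powr \<alpha> * M * norm v"
proof -
  have "g (dilE \<sigma> \<sigma>s r u) = r powr \<alpha> * g u"
    using hom \<open>u \<in> Omega\<close> \<open>r \<ge> 1\<close> by (simp add: homogeneous_on_def)
  then show "\<bar>g (dilE \<sigma> \<sigma>s r u)\<bar> \<le> r powr \<alpha> * M"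
    using g_le by (simp add: abs_mult mult_left_mono)
  have "g' (dilE \<sigma> \<sigma>s r u) v = g' (dilE \<sigma> \<sigma>s r u) (dilE \<sigma> \<sigma>s r (dilE \<sigma> \<sigma>s (1/r) v))"
    using \<open>r \<ge> 1\<close> by (simp add: dilE_inverse)
  also have "\<dots> = r powr \<alpha> * g' u (dilE \<sigma> \<sigma>s (1/r) v)"
    using \<open>r \<ge> 1\<close> \<open>u \<in> Omega\<close>
    by (intro has_derivative_homogeneous[OF open_Omega dilE_Omega bounded_linear_dilE der hom]) auto
  finally have "\<bar>g' (dilE \<sigma> \<sigma>s r u) v\<bar> = r powr \<alpha> * \<bar>g' u (dilE \<sigma> \<sigma>s (1/r) v)\<bar>"
    by (simp add: abs_mult)
  also have "\<dots> \<le> r powr \<alpha> * (M * norm v)"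
  proof (intro mult_left_mono)
    have "norm (dilE \<sigma> \<sigma>s (1/r) v) \<le> norm v"
      using \<open>r \<ge> 1\<close> \<sigma>_nonneg \<sigma>s_nonneg by (intro norm_dilE_le) auto
    then show "\<bar>g' u (dilE \<sigma> \<sigma>s (1/r) v)\<bar> \<le> M * norm v"
      using g'_le g_le by (meson abs_ge_zero mult_left_mono order_trans)
  qed simp
  finally show "\<bar>g' (dilE \<sigma> \<sigma>s r u) v\<bar> \<le> r powr \<alpha> * M * norm v" by simp
qed

lemma homogeneous_dominated_by_decay_weight:
  fixes g :: "(real \<times> (real^'n::finite)) \<times> (real \<times> (real^'n)) \<times> (real^'p::finite) \<Rightarrow> real"
    and z \<zeta> :: "real \<times> (real^'n)"
  assumes "z \<noteq> \<zeta>" and \<sigma>_nonneg: "\<forall>i. \<sigma> i \<ge> 0" and \<sigma>s_pos: "\<forall>k. \<sigma>s k > 0" and "\<gamma> \<le> 0"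
    and der: "\<And>u. u \<in> Omega \<Longrightarrow> (g has_derivative g' u) (at u)"
    and cont: "\<And>v. continuous_on Omega (\<lambda>u. g' u v)"
    and hom: "homogeneous_on Omega (dilE \<sigma> \<sigma>s) (\<gamma> * (\<Sum>k\<in>UNIV. \<sigma>s k)) g"
  obtains \<delta> M where "\<delta> > 0"
    "\<And>w (\<eta> :: real^'p). w \<in> ball (z, \<zeta>) \<delta> \<Longrightarrow> (fst w, snd w, \<eta>) \<in> Omega"
    "\<And>w \<eta>. w \<in> ball (z, \<zeta>) \<delta> \<Longrightarrow> \<bar>g (fst w, snd w, \<eta>)\<bar> \<le> M * decay_weight \<gamma> \<eta>"
    "\<And>w \<eta> v. w \<in> ball (z, \<zeta>) \<delta> \<Longrightarrow> \<bar>g' (fst w, snd w, \<eta>) v\<bar> \<le> M * decay_weight \<gamma> \<eta> * norm v"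
proof -
  let ?\<alpha> = "\<gamma> * (\<Sum>k\<in>UNIV. \<sigma>s k)"
  obtain \<delta> K where "\<delta> > 0" "compact K" "K \<subseteq> Omega"
    and slice: "\<And>w (\<eta> :: real^'p). w \<in> ball (z, \<zeta>) \<delta> \<Longrightarrow> (fst w, snd w, \<eta>) \<in> Omega" and rescaled:
    "\<And>w \<eta>. w \<in> ball (z, \<zeta>) \<delta> \<Longrightarrow> dilE \<sigma> \<sigma>s (1 / max 1 (hom_norm \<sigma>s \<eta>)) (fst w, snd w, \<eta>) \<in> K"
    by (rule rescaled_off_diagonal_in_compact[OF \<open>z \<noteq> \<zeta>\<close> \<sigma>_nonneg \<sigma>s_pos]) (rule that)
  obtain M where "0 \<le> M" and M_g: "\<And>u. u \<in> K \<Longrightarrow> \<bar>g u\<bar> \<le> M"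
    and M_g': "\<And>u v. u \<in> K \<Longrightarrow> \<bar>g' u v\<bar> \<le> M * norm v"
    by (rule C1_bounded_on_compact[OF der cont \<open>compact K\<close> \<open>K \<subseteq> Omega\<close>]) (assumption | rule that)+
  have \<sigma>s_nonneg: "\<forall>k. \<sigma>s k \<ge> 0" using \<sigma>s_pos by (simp add: less_imp_le)
  have bounds: "\<bar>g u\<bar> \<le> M * decay_weight \<gamma> \<eta> \<and> (\<forall>v. \<bar>g' u v\<bar> \<le> M * decay_weight \<gamma> \<eta> * norm v)"
    if w: "w \<in> ball (z, \<zeta>) \<delta>" and u: "u = (fst w, snd w, \<eta>)" for w \<eta> u
  proof -
    define r where "r = max 1 (hom_norm \<sigma>s \<eta>)"
    have "r \<ge> 1" by (simp add: r_def)
    define u' where "u' = dilE \<sigma> \<sigma>s (1/r) u"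
    have "u' \<in> K" using rescaled[OF w] by (simp add: u'_def u r_def)
    have u_eq: "u = dilE \<sigma> \<sigma>s r u'" using \<open>r \<ge> 1\<close> by (simp add: u'_def dilE_inverse)
    have "r powr ?\<alpha> \<le> decay_weight \<gamma> \<eta>"
      using max_1_hom_norm_powr_le_decay_weight[OF \<sigma>s_pos \<open>\<gamma> \<le> 0\<close>] by (simp add: r_def)
    with \<open>0 \<le> M\<close> have weight: "r powr ?\<alpha> * M \<le> M * decay_weight \<gamma> \<eta>"
      by (simp add: mult.commute mult_left_mono)
    have "u' \<in> Omega" using \<open>u' \<in> K\<close> \<open>K \<subseteq> Omega\<close> by auto
    note dilate = homogeneous_bounds_dilE[OF \<sigma>_nonneg \<sigma>s_nonneg der hom \<open>r \<ge> 1\<close> \<open>u' \<in> Omega\<close>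
        M_g[OF \<open>u' \<in> K\<close>] M_g'[OF \<open>u' \<in> K\<close>]]
    have "\<bar>g u\<bar> \<le> M * decay_weight \<gamma> \<eta>"
      using dilate(1) weight unfolding u_eq by linarith
    moreover have "\<bar>g' u v\<bar> \<le> M * decay_weight \<gamma> \<eta> * norm v" for v
      using dilate(2)[of v] mult_right_mono[OF weight norm_ge_zero[of v]] unfolding u_eq by linarith
    ultimately show ?thesis by blast
  qed
  show ?thesis
    by (rule that[OF \<open>\<delta> > 0\<close> slice]) (use bounds in blast)+
qed

lemma has_derivative_reassoc:
  "((\<lambda>w. (fst w, snd w, \<eta>)) has_derivative (\<lambda>h. (fst h, snd h, 0))) (at w)"
  by (auto intro!: derivative_eq_intros)

lemma norm_reassoc_0: "norm (fst h, snd h, 0) = norm h"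
  by (cases h) (simp add: norm_Pair)

lemma has_derivative_integral_off_diagonal:
  fixes g :: "(real \<times> (real^'n::finite)) \<times> (real \<times> (real^'n)) \<times> (real^'p::finite) \<Rightarrow> real"
    and z \<zeta> :: "real \<times> (real^'n)"
  assumes "z \<noteq> \<zeta>" and \<sigma>_nonneg: "\<forall>i. \<sigma> i \<ge> 0" and \<sigma>s_pos: "\<forall>k. \<sigma>s k > 0"
    and der: "\<And>u. u \<in> Omega \<Longrightarrow> (g has_derivative g' u) (at u)"
    and cont: "\<And>v. continuous_on Omega (\<lambda>u. g' u v)"
    and hom: "homogeneous_on Omega (dilE \<sigma> \<sigma>s) \<alpha> g"
    and \<alpha>_lt: "\<alpha> < - (\<Sum>k\<in>UNIV. \<sigma>s k)"
  shows "integrable lborel (\<lambda>\<eta>. g (z, \<zeta>, \<eta>))"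
    and "\<And>h. integrable lborel (\<lambda>\<eta>. frechet_derivative (\<lambda>w. g (fst w, snd w, \<eta>)) (at (z, \<zeta>)) h)"
    and "((\<lambda>w. \<integral>\<eta>. g (fst w, snd w, \<eta>) \<partial>lborel) has_derivative
          (\<lambda>h. \<integral>\<eta>. frechet_derivative (\<lambda>w. g (fst w, snd w, \<eta>)) (at (z, \<zeta>)) h \<partial>lborel)) (at (z, \<zeta>))"
proof -
  define \<gamma> where "\<gamma> = \<alpha> / (\<Sum>k\<in>UNIV. \<sigma>s k)"
  have "(\<Sum>k\<in>UNIV. \<sigma>s k) > 0" using \<sigma>s_pos by (simp add: sum_pos)
  then have "\<gamma> < -1" and "\<alpha> = \<gamma> * (\<Sum>k\<in>UNIV. \<sigma>s k)"
    using \<alpha>_lt by (simp_all add: \<gamma>_def divide_less_eq)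
  with hom obtain \<delta> M where "\<delta> > 0"
    and slice: "\<And>w (\<eta> :: real^'p). w \<in> ball (z, \<zeta>) \<delta> \<Longrightarrow> (fst w, snd w, \<eta>) \<in> Omega"
    and bound_G: "\<And>w \<eta>. w \<in> ball (z, \<zeta>) \<delta> \<Longrightarrow> \<bar>g (fst w, snd w, \<eta>)\<bar> \<le> M * decay_weight \<gamma> \<eta>"
    and bound_g': "\<And>w \<eta> v. w \<in> ball (z, \<zeta>) \<delta> \<Longrightarrow>
      \<bar>g' (fst w, snd w, \<eta>) v\<bar> \<le> M * decay_weight \<gamma> \<eta> * norm v"
    using homogeneous_dominated_by_decay_weight[OF \<open>z \<noteq> \<zeta>\<close> \<sigma>_nonneg \<sigma>s_pos _ der cont, of \<gamma>]
    by auto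
  define D where "D w \<eta> h = g' (fst w, snd w, \<eta>) (fst h, snd h, 0::real^'p)"
    for w h :: "(real \<times> (real^'n)) \<times> (real \<times> (real^'n))" and \<eta> :: "real^'p"
  have center: "(z, \<zeta>) \<in> ball (z, \<zeta>) \<delta>" using \<open>\<delta> > 0\<close> by simp
  have der_G: "((\<lambda>w. g (fst w, snd w, \<eta>)) has_derivative D w \<eta>) (at w)"
    if "w \<in> ball (z, \<zeta>) \<delta>" for w \<eta>
    using diff_chain_at[OF has_derivative_reassoc der[OF slice[OF that]]]
    unfolding D_def[abs_def] comp_def .
  have bound_D: "\<bar>D w \<eta> h\<bar> \<le> M * decay_weight \<gamma> \<eta> * norm h" if "w \<in> ball (z, \<zeta>) \<delta>" for w \<eta> h
    using bound_g'[OF that, of \<eta> "(fst h, snd h, 0)"] unfolding D_def norm_reassoc_0 .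
  have "continuous_on Omega g"
    by (rule has_derivative_continuous_on[OF has_derivative_at_withinI[OF der]])
  have continuous_slice: "continuous_on UNIV (\<lambda>\<eta>. f (fst w, snd w, \<eta>))"
    if "continuous_on Omega f" "w \<in> ball (z, \<zeta>) \<delta>"
    for f :: "(real \<times> (real^'n)) \<times> (real \<times> (real^'n)) \<times> (real^'p) \<Rightarrow> real" and w
  proof (rule continuous_on_compose2[OF that(1)])
    show "continuous_on UNIV (\<lambda>\<eta>::real^'p. (fst w, snd w, \<eta>))" by (intro continuous_intros)
    show "range (\<lambda>\<eta>::real^'p. (fst w, snd w, \<eta>)) \<subseteq> Omega" using slice[OF that(2)] by blast
  qed
  have meas_G: "(\<lambda>\<eta>. g (fst w, snd w, \<eta>)) \<in> borel_measurable lborel" if "w \<in> ball (z, \<zeta>) \<delta>" for w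
    using continuous_slice[OF \<open>continuous_on Omega g\<close> that] by (simp add: borel_measurable_continuous_onI)
  have meas_D: "(\<lambda>\<eta>. D (z, \<zeta>) \<eta> h) \<in> borel_measurable lborel" for h
    using continuous_slice[OF cont center] by (simp add: D_def borel_measurable_continuous_onI)
  note leibniz_hyps = \<open>\<delta> > 0\<close> der_G bound_G bound_D
    integrable_mult_right[OF integrable_decay_weight[OF \<open>\<gamma> < -1\<close>]] meas_G meas_D
  have D_eq: "D (z, \<zeta>) \<eta> = frechet_derivative (\<lambda>w. g (fst w, snd w, \<eta>)) (at (z, \<zeta>))" for \<eta>
    using frechet_derivative_at[OF der_G[OF center]] .
  show "integrable lborel (\<lambda>\<eta>. g (z, \<zeta>, \<eta>))"
    using integrable_parametric[OF leibniz_hyps center] by simp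
  show "\<And>h. integrable lborel (\<lambda>\<eta>. frechet_derivative (\<lambda>w. g (fst w, snd w, \<eta>)) (at (z, \<zeta>)) h)"
    using integrable_parametric_derivative[OF leibniz_hyps] by (simp add: D_eq)
  show "((\<lambda>w. \<integral>\<eta>. g (fst w, snd w, \<eta>) \<partial>lborel) has_derivative
          (\<lambda>h. \<integral>\<eta>. frechet_derivative (\<lambda>w. g (fst w, snd w, \<eta>)) (at (z, \<zeta>)) h \<partial>lborel)) (at (z, \<zeta>))"
    using has_derivative_integral[OF leibniz_hyps] by (simp add: D_eq)
qed

theorem lemma3p1:
  fixes \<sigma> :: "'n::finite \<Rightarrow> real" and \<sigma>s :: "'p::finite \<Rightarrow> real"
    and g :: "(real \<times> (real^'n)) \<times> (real \<times> (real^'n)) \<times> (real^'p) \<Rightarrow> real"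
    and a :: "(real \<times> (real^'n)) \<times> (real \<times> (real^'n)) \<Rightarrow> (real \<times> (real^'n)) \<times> (real \<times> (real^'n))"
    and \<alpha> m :: real
  assumes sigma_ge1: "\<forall>i. \<sigma> i \<ge> 1" and sigma_one: "\<exists>i. \<sigma> i = 1"
    and sigmas_pos: "\<forall>k. \<sigma>s k > 0"
    and g_smooth: "smooth_on (Omega :: ((real \<times> (real^'n)) \<times> (real \<times> (real^'n)) \<times> (real^'p)) set) g"
    and g_hom: "homogeneous_on Omega (dilE \<sigma> \<sigma>s) \<alpha> g"
    and alpha_lt: "\<alpha> < - (\<Sum>k\<in>UNIV. \<sigma>s k)"
    and Z_smooth: "smooth_vf a"
    and m_pos: "m > 0"
    and Z_hom: "homogeneous_vf (dilW \<sigma>) m a"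
  shows "(\<forall>z \<zeta>. z \<noteq> \<zeta> \<longrightarrow> integrable lborel (\<lambda>\<eta>. g (z, \<zeta>, \<eta>)))
    \<and> (\<forall>z \<zeta>. z \<noteq> \<zeta> \<longrightarrow>
          (\<lambda>w. \<integral>\<eta>. g (fst w, snd w, \<eta>) \<partial>lborel) differentiable (at (z, \<zeta>))
        \<and> integrable lborel (\<lambda>\<eta>. vf_apply a (\<lambda>w. g (fst w, snd w, \<eta>)) (z, \<zeta>))
        \<and> vf_apply a (\<lambda>w. \<integral>\<eta>. g (fst w, snd w, \<eta>) \<partial>lborel) (z, \<zeta>)
          = (\<integral>\<eta>. vf_apply a (\<lambda>w. g (fst w, snd w, \<eta>)) (z, \<zeta>) \<partial>lborel))"
proof -
  \<comment> \<open>The vector field acts at (z, \<zeta>) only through its value a (z, \<zeta>).\<close>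
  have \<sigma>_nonneg: "\<forall>i. \<sigma> i \<ge> 0" using sigma_ge1 by (auto intro: order_trans[OF zero_le_one])
  note g_der = smooth_on_has_derivative[OF g_smooth open_Omega]
  note g'_cont = smooth_on_imp_continuous_on[OF smooth_on_derivative[OF g_smooth]]
  note off_diagonal = has_derivative_integral_off_diagonal[OF _ \<sigma>_nonneg sigmas_pos g_der g'_cont g_hom alpha_lt]
  have "integrable lborel (\<lambda>\<eta>. g (z, \<zeta>, \<eta>))
        \<and> (\<lambda>w. \<integral>\<eta>. g (fst w, snd w, \<eta>) \<partial>lborel) differentiable (at (z, \<zeta>))
        \<and> integrable lborel (\<lambda>\<eta>. vf_apply a (\<lambda>w. g (fst w, snd w, \<eta>)) (z, \<zeta>))
        \<and> vf_apply a (\<lambda>w. \<integral>\<eta>. g (fst w, snd w, \<eta>) \<partial>lborel) (z, \<zeta>)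
          = (\<integral>\<eta>. vf_apply a (\<lambda>w. g (fst w, snd w, \<eta>)) (z, \<zeta>) \<partial>lborel)" if "z \<noteq> \<zeta>" for z \<zeta>
  proof (intro conjI)
    note integral_derivative = off_diagonal(3)[OF that]
    show "integrable lborel (\<lambda>\<eta>. g (z, \<zeta>, \<eta>))" by (rule off_diagonal(1)[OF that])
    show "(\<lambda>w. \<integral>\<eta>. g (fst w, snd w, \<eta>) \<partial>lborel) differentiable (at (z, \<zeta>))"
      using integral_derivative by (rule differentiableI)
    show "integrable lborel (\<lambda>\<eta>. vf_apply a (\<lambda>w. g (fst w, snd w, \<eta>)) (z, \<zeta>))"
      unfolding vf_apply_def by (rule off_diagonal(2)[OF that])
    show "vf_apply a (\<lambda>w. \<integral>\<eta>. g (fst w, snd w, \<eta>) \<partial>lborel) (z, \<zeta>)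
        = (\<integral>\<eta>. vf_apply a (\<lambda>w. g (fst w, snd w, \<eta>)) (z, \<zeta>) \<partial>lborel)"
      using frechet_derivative_at[OF integral_derivative, symmetric] by (simp add: vf_apply_def)
  qed
  then show ?thesis by blast
qed

end
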